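(* (1) For all $\mathit{pts},\mathit{pts}'\in\mathit{PTS}$ with $\mathit{pts}\le\mathit{pts}'$, and every state $(\gamma,p)$ with $\gamma\in\Gamma$, $p\in[0,1]$: if $(\gamma,p)\models\mathit{pts}$ then $(\gamma,p)\models\mathit{pts}'$. (2) Let $e$ be an arithmetic expression, $\mathit{pts}\in\mathit{PTS}$, and suppose the judgment $e:\mathit{pts}\to A$ holds and $(\gamma,p)\models\mathit{pts}$. If $\llbracket e\rrbracket\gamma\in\mathit{Addrs}$, then $(\llbracket e\rrbracket\gamma,q)\in A$ for some $q>0$.
   Context: $\mathit{Var}$ is a finite set of program variables; $\mathit{Addrs}=\{x'\mid x\in\mathit{Var}\}$ is a set of symbolic addresses, $\mathit{Val}=\mathbb{Z}\cup\mathit{Addrs}$, $\Gamma=\mathit{Var}\to\mathit{Val}$, and a state is a pair $(\gamma,p)$ with $\gamma\in\Gamma$, $p\in[0,1]$. $\mathit{Addrs}_p=\mathit{Addrs}\times[0,1]$. $\textit{Pre-PTS}$ is the set of maps $\mathit{pts}:\mathit{Var}\to 2^{\mathit{Addrs}_p}$ such that $(y',p_1),(y',p_2)\in\mathit{pts}(x)$ implies $p_1=p_2$; $A_{\mathit{pts}}(x)=\{z'\mid\exists p>0.\ (z',p)\in\mathit{pts}(x)\}$; $\mathit{PTS}$ is the set of $\mathit{pts}\in\textit{Pre-PTS}$ with $\sum_{(z',p)\in\mathit{pts}(x)}p\le 1$ for all $x$. Subtyping: $\mathit{pts}\le\mathit{pts}'$ iff $A_{\mathit{pts}}(x)\subseteq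 A_{\mathit{pts}'}(x)$ for all $x$. Satisfaction: $(\gamma,p)\models\mathit{pts}$ iff for every $x\in\mathit{Var}$, $\gamma(x)\in\mathit{Addrs}$ implies there is $q>0$ with $(\gamma(x),q)\in\mathit{pts}(x)$. Arithmetic expressions are $e::= x\mid n\mid e_1\oplus e_2$ with $x\in\mathit{Var}$, $n\in\mathbb{Z}$, $\oplus\in\{+,-,\times\}$; their semantics is $\llbracket n\rrbracket\gamma=n$, $\llbracket x\rrbracket\gamma=\gamma(x)$, and $\llbracket e_1\oplus e_2\rrbracket\gamma=\llbracket e_1\rrbracket\gamma\oplus\llbracket e_2\rrbracket\gamma$ if both are integers, and an error value $!$ otherwise. The judgment $e:\mathit{pts}\to A$ (with $A\subseteq\mathit{Addrs}_p$) is given by the rules $n:\mathit{pts}\to\emptyset$, $x:\mathit{pts}\to\mathit{pts}(x)$, and $e_1\oplus e_2:\mathit{pts}\to\emptyset$. *)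

theory Defs
  imports Main "HOL-Analysis.Analysis"
begin

text \<open>Program variables: a finite type 'v. Symbolic addresses x' are represented by Addr x.
  Values Val = Z \<union> Addrs.\<close>
datatype 'v val = IntV int | Addr 'v

type_synonym 'v env = "'v \<Rightarrow> 'v val"
type_synonym 'v state = "'v env \<times> real"
type_synonym 'v pts = "'v \<Rightarrow> ('v \<times> real) set"

definition is_addr :: "'v val \<Rightarrow> bool" where
  "is_addr v \<longleftrightarrow> (\<exists>z. v = Addr z)"

definition pre_pts :: "('v::finite) pts \<Rightarrow> bool" where
  "pre_pts pts \<longleftrightarrow>
     (\<forall>x z p. (z, p) \<in> pts x \<longrightarrow> 0 \<le> p \<and> p \<le> 1) \<and>
     (\<forall>x y p1 p2. (y, p1) \<in> pts x \<longrightarrow> (y, p2) \<in> pts x \<longrightarrow> p1 = p2)"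

definition A_pts :: "'v pts \<Rightarrow> 'v \<Rightarrow> 'v set" where
  "A_pts pts x = {z. \<exists>p>0. (z, p) \<in> pts x}"

definition is_PTS :: "('v::finite) pts \<Rightarrow> bool" where
  "is_PTS pts \<longleftrightarrow> pre_pts pts \<and> (\<forall>x. (\<Sum>(z, p)\<in>pts x. p) \<le> 1)"

definition pts_le :: "'v pts \<Rightarrow> 'v pts \<Rightarrow> bool" where
  "pts_le pts pts' \<longleftrightarrow> (\<forall>x. A_pts pts x \<subseteq> A_pts pts' x)"

definition sat :: "'v state \<Rightarrow> 'v pts \<Rightarrow> bool" where
  "sat s pts \<longleftrightarrow> (\<forall>x z. fst s x = Addr z \<longrightarrow> (\<exists>q>0. (z, q) \<in> pts x))"

datatype binop = Plus | Minus | Times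

datatype 'v aexp = V 'v | N int | Bin binop "'v aexp" "'v aexp"

fun apply_op :: "binop \<Rightarrow> int \<Rightarrow> int \<Rightarrow> int" where
  "apply_op Plus a b = a + b"
| "apply_op Minus a b = a - b"
| "apply_op Times a b = a * b"

text \<open>Semantics; None is the error value !.\<close>
fun aeval :: "'v aexp \<Rightarrow> 'v env \<Rightarrow> 'v val option" where
  "aeval (N n) \<gamma> = Some (IntV n)"
| "aeval (V x) \<gamma> = Some (\<gamma> x)"
| "aeval (Bin op e1 e2) \<gamma> =
     (case (aeval e1 \<gamma>, aeval e2 \<gamma>) of
        (Some (IntV a), Some (IntV b)) \<Rightarrow> Some (IntV (apply_op op a b))
      | _ \<Rightarrow> None)"

inductive aexp_typ :: "'v aexp \<Rightarrow> 'v pts \<Rightarrow> ('v \<times> real) set \<Rightarrow> bool" where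
  typ_N: "aexp_typ (N n) pts {}"
| typ_V: "aexp_typ (V x) pts (pts x)"
| typ_Bin: "aexp_typ (Bin op e1 e2) pts {}"

end

theory Submission
  imports Defs
begin

lemma sat_mono:
  assumes "pts_le pts pts'" and "sat s pts"
  shows "sat s pts'"
  using assms unfolding pts_le_def sat_def A_pts_def by fastforce

lemma aeval_Bin_ne_Addr: "aeval (Bin op e1 e2) \<gamma> \<noteq> Some (Addr z)"
  by (auto split: option.splits val.splits)

lemma aexp_typ_sound:
  assumes "aexp_typ e pts A" and "sat (\<gamma>, p) pts" and "aeval e \<gamma> = Some (Addr z)"
  shows "\<exists>q>0. (z, q) \<in> A"
  using assms(1)
proof cases
  case typ_N
  then show ?thesis using assms(3) by simp
next
  case (typ_V x)
  then show ?thesis using assms(2,3) unfolding sat_def by auto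
next
  case (typ_Bin op e1 e2)
  then have False using assms(3) aeval_Bin_ne_Addr by metis
  then show ?thesis ..
qed

theorem lemma3:
  shows "(\<forall>(pts :: ('v::finite) pts) pts' (\<gamma> :: 'v env) (p :: real).
            is_PTS pts \<longrightarrow> is_PTS pts' \<longrightarrow> pts_le pts pts' \<longrightarrow> 0 \<le> p \<longrightarrow> p \<le> 1 \<longrightarrow>
            sat (\<gamma>, p) pts \<longrightarrow> sat (\<gamma>, p) pts')
       \<and> (\<forall>(e :: 'v aexp) (pts :: 'v pts) A (\<gamma> :: 'v env) (p :: real) z.
            is_PTS pts \<longrightarrow> 0 \<le> p \<longrightarrow> p \<le> 1 \<longrightarrow> aexp_typ e pts A \<longrightarrow> sat (\<gamma>, p) pts \<longrightarrow>
            aeval e \<gamma> = Some (Addr z) \<longrightarrow> (\<exists>q>0. (z, q) \<in> A))"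
  \<comment> \<open>Neither part needs the well-formedness of the points-to maps or the bound on \<open>p\<close>.\<close>
proof (intro conjI allI impI)
  show "sat (\<gamma>, p) pts'" if "pts_le pts pts'" and "sat (\<gamma>, p) pts"
    for pts pts' :: "'v pts" and \<gamma> :: "'v env" and p :: real
    using sat_mono that .
  show "\<exists>q>0. (z, q) \<in> A"
    if "aexp_typ e pts A" and "sat (\<gamma>, p) pts" and "aeval e \<gamma> = Some (Addr z)"
    for e :: "'v aexp" and pts A and \<gamma> :: "'v env" and p :: real and z
    using aexp_typ_sound that .
qed

end
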